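(* Let $\mathfrak A$ be a unital C$^*$-algebra with trivial centre and $\rho,\bar\rho$ conjugate endomorphisms of $\mathfrak A$, i.e. there are $R\in(\iota,\bar\rho\rho)$, $\bar R\in(\iota,\rho\bar\rho)$ with $R^*\bar\rho(\bar R)=1$ and $\bar R^*\rho(R)=1$. Then $\lambda=\rho\bar\rho$ is a canonical endomorphism of $\mathfrak A$ with respect to the subalgebra $\rho(\mathfrak A)$.
   Context: $(\rho,\sigma)=\{T\in\mathfrak A:T\rho(a)=\sigma(a)T\ \forall a\in\mathfrak A\}$. For a unital C$^*$-subalgebra $\mathfrak B\subset\mathfrak A$, an endomorphism $\lambda$ of $\mathfrak A$ with $\lambda(\mathfrak A)\subset\mathfrak B$ is canonical with respect to $\mathfrak B$ if there are $T\in(\iota,\lambda)$ (in $\mathfrak A$) and $S\in\mathfrak B$ with $Sb=\lambda(b)S$ for all $b\in\mathfrak B$, such that $S^*\lambda(T)\in\mathbb C\setminus\{0\}$ and $T^*S\in\mathbb C\setminus\{0\}$. *)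

theory Defs
  imports Complex_Main
begin

class cstar_algebra = banach + real_normed_algebra_1 +
  fixes adj :: "'a \<Rightarrow> 'a"
    and scaleC :: "complex \<Rightarrow> 'a \<Rightarrow> 'a"
  assumes scaleC_of_real: "scaleC (complex_of_real r) x = scaleR r x"
    and scaleC_add_right: "scaleC c (x + y) = scaleC c x + scaleC c y"
    and scaleC_add_left: "scaleC (c + d) x = scaleC c x + scaleC d x"
    and scaleC_scaleC: "scaleC c (scaleC d x) = scaleC (c * d) x"
    and scaleC_one: "scaleC 1 x = x"
    and norm_scaleC: "norm (scaleC c x) = cmod c * norm x"
    and scaleC_mult_left: "scaleC c x * y = scaleC c (x * y)"
    and scaleC_mult_right: "x * scaleC c y = scaleC c (x * y)"
    and adj_adj: "adj (adj x) = x"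
    and adj_add: "adj (x + y) = adj x + adj y"
    and adj_scaleC: "adj (scaleC c x) = scaleC (cnj c) (adj x)"
    and adj_mult: "adj (x * y) = adj y * adj x"
    and cstar_identity: "norm (adj x * x) = (norm x)\<^sup>2"

definition endo :: "('a::cstar_algebra \<Rightarrow> 'a) \<Rightarrow> bool" where
  "endo \<rho> \<longleftrightarrow>
     (\<forall>x y. \<rho> (x + y) = \<rho> x + \<rho> y) \<and>
     (\<forall>c x. \<rho> (scaleC c x) = scaleC c (\<rho> x)) \<and>
     (\<forall>x y. \<rho> (x * y) = \<rho> x * \<rho> y) \<and>
     \<rho> 1 = 1 \<and>
     (\<forall>x. \<rho> (adj x) = adj (\<rho> x))"

definition intw :: "('a::cstar_algebra \<Rightarrow> 'a) \<Rightarrow> ('a \<Rightarrow> 'a) \<Rightarrow> 'a set" where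
  "intw \<rho> \<sigma> = {T. \<forall>a. T * \<rho> a = \<sigma> a * T}"

definition trivial_centre :: "'a::cstar_algebra itself \<Rightarrow> bool" where
  "trivial_centre _ \<longleftrightarrow> (\<forall>z::'a. (\<forall>a. z * a = a * z) \<longrightarrow> (\<exists>c. z = scaleC c 1))"

definition canonical_wrt :: "('a::cstar_algebra \<Rightarrow> 'a) \<Rightarrow> 'a set \<Rightarrow> bool" where
  "canonical_wrt lam B \<longleftrightarrow>
     endo lam \<and> range lam \<subseteq> B \<and>
     (\<exists>T S. T \<in> intw id lam \<and> S \<in> B \<and> (\<forall>b\<in>B. S * b = lam b * S) \<and>
        (\<exists>c. c \<noteq> 0 \<and> adj S * lam T = scaleC c 1) \<and>
        (\<exists>c. c \<noteq> 0 \<and> adj T * S = scaleC c 1))"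

end

theory Submission
  imports Defs
begin

text \<open>Take T = Rb and S = \<rho> R. Applying \<rho> to R \<in> (\<iota>, \<rho>b \<rho>) shows that S \<in> \<rho>(A)
  intertwines every element of \<rho>(A) with its image under \<lambda> = \<rho> \<rho>b, and the conjugate equations
  give adj S * \<lambda>(T) = \<rho>(adj R * \<rho>b(Rb)) = 1 and adj T * S = adj Rb * \<rho>(R) = 1.\<close>

lemma endo_comp:
  assumes "endo f" "endo g" shows "endo (f \<circ> g)"
  using assms unfolding endo_def by simp

lemma endo_mult: "endo f \<Longrightarrow> f (x * y) = f x * f y"
  and endo_one: "endo f \<Longrightarrow> f 1 = 1"
  and endo_adj: "endo f \<Longrightarrow> f (adj x) = adj (f x)"
  unfolding endo_def by auto

lemma intw_iff: "T \<in> intw \<sigma> \<tau> \<longleftrightarrow> (\<forall>a. T * \<sigma> a = \<tau> a * T)"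
  unfolding intw_def by simp

lemma endo_image_intw:
  assumes "endo f" "T \<in> intw \<sigma> \<tau>"
  shows "f T \<in> intw (f \<circ> \<sigma>) (f \<circ> \<tau>)"
  using assms by (simp add: intw_iff flip: endo_mult)

lemma intw_comp_commutes_range:
  assumes "S \<in> intw f (lam \<circ> f)"
  shows "\<forall>b\<in>range f. S * b = lam b * S"
  using assms by (auto simp: intw_iff)

lemma canonical_wrtI:
  assumes "endo lam" "range lam \<subseteq> B"
    and "T \<in> intw id lam" "S \<in> B" "\<forall>b\<in>B. S * b = lam b * S"
    and "adj S * lam T = 1" "adj T * S = 1"
  shows "canonical_wrt lam B"
  unfolding canonical_wrt_def
  using assms by (metis scaleC_one one_neq_zero)

theorem propositionA3:
  fixes \<rho> \<rho>b :: "'a::cstar_algebra \<Rightarrow> 'a" and R Rb :: 'a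
  assumes "trivial_centre TYPE('a)"
    and "endo \<rho>" and "endo \<rho>b"
    and "R \<in> intw id (\<rho>b \<circ> \<rho>)" and "Rb \<in> intw id (\<rho> \<circ> \<rho>b)"
    and "adj R * \<rho>b Rb = 1" and "adj Rb * \<rho> R = 1"
  shows "canonical_wrt (\<rho> \<circ> \<rho>b) (range \<rho>)"
proof (rule canonical_wrtI[where T = Rb and S = "\<rho> R"])
  show "endo (\<rho> \<circ> \<rho>b)" using assms(2,3) by (rule endo_comp)
  have "\<rho> R \<in> intw \<rho> ((\<rho> \<circ> \<rho>b) \<circ> \<rho>)"
    using endo_image_intw[OF assms(2,4)] by (simp add: comp_assoc)
  then show "\<forall>b\<in>range \<rho>. \<rho> R * b = (\<rho> \<circ> \<rho>b) b * \<rho> R"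
    by (rule intw_comp_commutes_range)
  have "adj (\<rho> R) * \<rho> (\<rho>b Rb) = \<rho> (adj R * \<rho>b Rb)"
    using assms(2) by (simp add: endo_mult endo_adj)
  then show "adj (\<rho> R) * (\<rho> \<circ> \<rho>b) Rb = 1"
    using assms(2,6) by (simp add: endo_one)
qed (use assms(5,7) in auto)

end
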